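(* Let $(K,D,v)$ be a VD-field such that $(K,v)$ is spherically complete and the residue field $Kv$ is linearly $D$-closed. Let $f\in\mathcal{O}[X_0,X_1,\dots,X_n]$ and assume there is $b\in\mathcal{O}$ such that $$\gamma:=\min_{0\le i\le n} v\frac{\partial f}{\partial X_i}(b,Db,\dots,D^nb)<\infty\quad\text{and}\quad vf(b,Db,\dots,D^nb)>2\gamma.$$ Then there is $a\in K$ such that $f(a,Da,\dots,D^na)=0$ and $v(a-b)>\gamma$.
   Context: $(K,v)$ is a valued field with valuation ring $\mathcal{O}=\{y:vy\ge0\}$, valuation ideal $\mathcal{M}=\{y:vy>0\}$, residue field $Kv=\mathcal{O}/\mathcal{M}$, value group $vK$. $(K,v)$ is spherically complete if the ultrametric space $(K,u)$ with $u(a,b)=v(a-b)$ is spherically complete, i.e. every family of balls $\{x: v(x-c)\ge\alpha\}$ (or unions of such with a common point) totally ordered by inclusion has non-empty intersection. A VD-field is a valued field $(K,v)$ with an additive map $D:K\to K$ such that: (VDF1) $vDa\ge va$ for all $a\in K$; (VDF2) $vK=\{va\mid a\in K,\ vDa>va\}$; (VDF3) there is $e\in\mathcal{O}$ with $D(ab)=aDb+bDa+e(Da)(Db)$ for all $a,b\in K$. By (VDF1), $D$ induces an additive map on $Kv$, again denoted $D$, with $D(av)=(Da)v$ for $a\in\mathcal{O}$. $D^i$ denotes the $i$-th iterate ($D^0=\mathrm{id}$). $Kv$ is linearly $D$-closed if every operator $\sum_{i=0}^n c_iD^i$ with $c_i\in Kv$ is surjective on $Kv$. *)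

theory Defs
  imports Main "HOL-Library.Extended"
begin

definition valuation :: "('a::field \<Rightarrow> 'g::linordered_ab_group_add extended) \<Rightarrow> bool" where
  "valuation v \<longleftrightarrow>
     (\<forall>x. v x = Pinf \<longleftrightarrow> x = 0) \<and>
     (\<forall>x. v x \<noteq> Minf) \<and>
     (\<forall>x y. v (x * y) = v x + v y) \<and>
     (\<forall>x y. min (v x) (v y) \<le> v (x + y))"

definition vball :: "('a::field \<Rightarrow> 'g::linordered_ab_group_add extended) \<Rightarrow> 'a \<Rightarrow> 'g \<Rightarrow> 'a set" where
  "vball v c \<alpha> = {x. Fin \<alpha> \<le> v (x - c)}"

definition spherically_complete :: "('a::field \<Rightarrow> 'g::linordered_ab_group_add extended) \<Rightarrow> bool" where
  "spherically_complete v \<longleftrightarrow>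
     (\<forall>\<B>. \<B> \<noteq> {} \<longrightarrow> (\<forall>B\<in>\<B>. \<exists>c \<alpha>. B = vball v c \<alpha>) \<longrightarrow>
        (\<forall>B1\<in>\<B>. \<forall>B2\<in>\<B>. B1 \<subseteq> B2 \<or> B2 \<subseteq> B1) \<longrightarrow> \<Inter>\<B> \<noteq> {})"

definition VD_field :: "('a::field \<Rightarrow> 'g::linordered_ab_group_add extended) \<Rightarrow> ('a \<Rightarrow> 'a) \<Rightarrow> bool" where
  "VD_field v D \<longleftrightarrow>
     valuation v \<and>
     (\<forall>a b. D (a + b) = D a + D b) \<and>
     (\<forall>a. v a \<le> v (D a)) \<and>
     {v a | a. v a < v (D a)} = {v a | a. a \<noteq> 0} \<and>
     (\<exists>e. 0 \<le> v e \<and> (\<forall>a b. D (a * b) = a * D b + b * D a + e * D a * D b))"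

text \<open>The residue field Kv = O/M is linearly D-closed: every nonzero operator
  sum c_i D^i (c_i in Kv) is surjective on Kv. Written out on representatives:
  residues of c_i are given by c_i in O, not all in M; an element d of Kv by d in O;
  equality in Kv means the difference lies in M.\<close>
definition residue_linearly_D_closed :: "('a::field \<Rightarrow> 'g::linordered_ab_group_add extended) \<Rightarrow> ('a \<Rightarrow> 'a) \<Rightarrow> bool" where
  "residue_linearly_D_closed v D \<longleftrightarrow>
     (\<forall>(n::nat) (c::nat \<Rightarrow> 'a) d.
        (\<forall>i\<le>n. 0 \<le> v (c i)) \<longrightarrow> (\<exists>i\<le>n. v (c i) = 0) \<longrightarrow> 0 \<le> v d \<longrightarrow>
        (\<exists>a. 0 \<le> v a \<and> 0 < v ((\<Sum>i\<le>n. c i * (D ^^ i) a) - d)))"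

text \<open>Multivariate polynomials in the variables X_0,...,X_n: coefficient functions
  on exponent vectors (nat \<Rightarrow> nat) with finite support, monomials only in X_0..X_n.\<close>
definition is_mpoly :: "nat \<Rightarrow> ((nat \<Rightarrow> nat) \<Rightarrow> 'a::field) \<Rightarrow> bool" where
  "is_mpoly n f \<longleftrightarrow> finite {m. f m \<noteq> 0} \<and> (\<forall>m. f m \<noteq> 0 \<longrightarrow> (\<forall>i>n. m i = 0))"

definition mpoly_eval :: "nat \<Rightarrow> ((nat \<Rightarrow> nat) \<Rightarrow> 'a::field) \<Rightarrow> (nat \<Rightarrow> 'a) \<Rightarrow> 'a" where
  "mpoly_eval n f x = (\<Sum>m\<in>{m. f m \<noteq> 0}. f m * (\<Prod>i\<le>n. x i ^ m i))"

definition mpoly_pderiv :: "nat \<Rightarrow> ((nat \<Rightarrow> nat) \<Rightarrow> 'a::field) \<Rightarrow> ((nat \<Rightarrow> nat) \<Rightarrow> 'a)" where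
  "mpoly_pderiv j f = (\<lambda>m. of_nat (Suc (m j)) * f (m(j := Suc (m j))))"

end

(*
  Call a an approximate zero if it is close to b and F a = f(a, Da, ..., D^n a) has value at
  least v (F b).  By Taylor expansion, the ball of radius v (F a) - \<gamma> around an approximate
  zero consists of approximate zeros, and these balls are nested.  If F had no zero within
  distance > \<gamma> of b, a Newton step would yield, inside every such ball, a point a' with
  v (F a') > v (F a), hence a strictly smaller ball: solve the linearised equation over the
  residue field, where it becomes a linear differential equation, and rescale the solution by
  some t with v t = v (F a) - \<gamma> < v (D t), which exists by (VDF2).  But spherical completeness
  combined with Zorn's lemma provides a minimal ball.
*)

theory Submission
  imports Defs
begin

lemma Fin_less_imp_nonneg:
  "0 \<le> g \<Longrightarrow> Fin g < (x::'g::linordered_ab_group_add extended) \<Longrightarrow> 0 \<le> x"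
  by (cases x) (auto simp: zero_extended_def)

lemma extended_le_add_nonneg: "0 \<le> (s::'g::linordered_ab_group_add extended) \<Longrightarrow> r \<le> r + s"
  using add_left_mono[of 0 s r] by simp

locale valued_field =
  fixes v :: "'a::field \<Rightarrow> 'g::linordered_ab_group_add extended"
  assumes valuation: "valuation v"
begin

lemma v_eq_Pinf_iff [simp]: "v x = Pinf \<longleftrightarrow> x = 0"
  using valuation unfolding valuation_def by blast

lemma v_zero [simp]: "v 0 = Pinf"
  by simp

lemma v_neq_Minf [simp]: "v x \<noteq> Minf"
  using valuation unfolding valuation_def by blast

lemma v_mult: "v (x * y) = v x + v y"
  using valuation unfolding valuation_def by blast

lemma v_add_min: "min (v x) (v y) \<le> v (x + y)"
  using valuation unfolding valuation_def by blast

lemma v_one [simp]: "v 1 = 0"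
proof -
  obtain z where z: "v 1 = Fin z"
    by (cases "v 1") auto
  have "v 1 = v 1 + v 1"
    using v_mult[of 1 1] by simp
  with z show ?thesis
    by (simp add: zero_extended_def)
qed

lemma v_minus_one [simp]: "v (-1) = 0"
proof -
  obtain z where z: "v (-1) = Fin z"
    by (cases "v (-1)") auto
  have "v 1 = v (-1) + v (-1)"
    using v_mult[of "-1" "-1"] by simp
  with z have "z + z = 0"
    by (simp add: zero_extended_def)
  then have "z = 0"
    using add_pos_pos[of z z] add_neg_neg[of z z] by (metis less_irrefl linorder_neqE)
  with z show ?thesis
    by (simp add: zero_extended_def)
qed

lemma v_uminus [simp]: "v (- x) = v x"
  using v_mult[of "-1" x] by simp

lemma v_add_ge: "r \<le> v x \<Longrightarrow> r \<le> v y \<Longrightarrow> r \<le> v (x + y)"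
  using v_add_min[of x y] by (meson min.bounded_iff order_trans)

lemma v_add_gt: "r < v x \<Longrightarrow> r < v y \<Longrightarrow> r < v (x + y)"
  using v_add_min[of x y] by (metis min_less_iff_conj order_less_le_trans)

lemma v_add_eq_left: assumes "v x < v y" shows "v (x + y) = v x"
proof -
  have "v x \<le> v (x + y)"
    using v_add_min[of x y] assms by simp
  moreover have "min (v (x + y)) (v (- y)) \<le> v x"
    using v_add_min[of "x + y" "- y"] by simp
  ultimately show ?thesis
    using assms by (auto simp: min_def split: if_splits)
qed

lemma v_mult_ge: "r \<le> v x \<Longrightarrow> s \<le> v y \<Longrightarrow> r + s \<le> v (x * y)"
  by (simp add: v_mult add_mono)

lemma v_mult_gt: "Fin r \<le> v x \<Longrightarrow> Fin s < v y \<Longrightarrow> Fin (r + s) < v (x * y)"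
  unfolding v_mult by (cases "v x"; cases "v y") (auto intro: add_le_less_mono)

lemma v_mult_ge_left: "0 \<le> v x \<Longrightarrow> r \<le> v y \<Longrightarrow> r \<le> v (x * y)"
  using v_mult_ge[of 0 x r y] by simp

lemma v_mult_ge_right: "r \<le> v x \<Longrightarrow> 0 \<le> v y \<Longrightarrow> r \<le> v (x * y)"
  using v_mult_ge[of r x 0 y] by simp

lemma v_mult_nonneg: "0 \<le> v x \<Longrightarrow> 0 \<le> v y \<Longrightarrow> 0 \<le> v (x * y)"
  by (rule v_mult_ge_left)

lemma v_divide: assumes "v s = Fin z" shows "v (x / s) = v x - Fin z"
proof -
  have "s \<noteq> 0"
    using assms by auto
  then have "v x = v (x / s) + v s"
    by (metis nonzero_eq_divide_eq v_mult)
  with assms show ?thesis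
    by (cases "v (x / s)") auto
qed

lemma v_sum_ge: "(\<And>i. i \<in> S \<Longrightarrow> r \<le> v (f i)) \<Longrightarrow> r \<le> v (sum f S)"
  by (induction S rule: infinite_finite_induct) (auto intro: v_add_ge)

lemma v_sum_gt: "r \<noteq> Pinf \<Longrightarrow> (\<And>i. i \<in> S \<Longrightarrow> r < v (f i)) \<Longrightarrow> r < v (sum f S)"
proof (induction S rule: infinite_finite_induct)
  case (insert x F)
  then show ?case by (auto intro: v_add_gt)
qed (cases r; auto)+

lemma v_prod_nonneg: "(\<And>i. i \<in> S \<Longrightarrow> 0 \<le> v (f i)) \<Longrightarrow> 0 \<le> v (prod f S)"
  by (induction S rule: infinite_finite_induct) (auto intro: v_mult_nonneg)

lemma v_power_nonneg: "0 \<le> v x \<Longrightarrow> 0 \<le> v (x ^ k)"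
  by (induction k) (auto intro: v_mult_nonneg)

lemma v_of_nat_nonneg: "0 \<le> v (of_nat k)"
  by (induction k) (auto intro: v_add_ge)

lemma vball_subset:
  assumes "c \<in> vball v a r" and "r \<le> s" shows "vball v c s \<subseteq> vball v a r"
proof
  fix x assume "x \<in> vball v c s"
  then have "Fin r \<le> v ((x - c) + (c - a))"
    using assms by (intro v_add_ge) (auto simp: vball_def intro: order_trans[of _ "Fin s"])
  then show "x \<in> vball v a r"
    by (simp add: vball_def)
qed

lemma residue_linearly_D_closed_scaled:
  assumes closed: "residue_linearly_D_closed v D" and i\<^sub>0: "i\<^sub>0 \<le> n"
    and p: "\<And>i. i \<le> n \<Longrightarrow> Fin g \<le> v (p i)" and p_i\<^sub>0: "v (p i\<^sub>0) = Fin g"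
    and w: "Fin g \<le> v w"
  shows "\<exists>u. 0 \<le> v u \<and> Fin g < v ((\<Sum>i\<le>n. p i * (D ^^ i) u) - w)"
proof -
  have "p i\<^sub>0 \<noteq> 0"
    using p_i\<^sub>0 by auto
  have v_div: "0 \<le> v (x / p i\<^sub>0)" if "Fin g \<le> v x" for x
    using that v_divide[OF p_i\<^sub>0, of x] by (cases "v x") (auto simp: zero_extended_def)
  have "\<forall>i\<le>n. 0 \<le> v (p i / p i\<^sub>0)"
    using p v_div by blast
  moreover have "\<exists>i\<le>n. v (p i / p i\<^sub>0) = 0"
    using i\<^sub>0 \<open>p i\<^sub>0 \<noteq> 0\<close> by auto
  moreover have "0 \<le> v (w / p i\<^sub>0)"
    using v_div w by blast
  ultimately obtain u where u: "0 \<le> v u" "0 < v ((\<Sum>i\<le>n. p i / p i\<^sub>0 * (D ^^ i) u) - w / p i\<^sub>0)"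
    using closed[unfolded residue_linearly_D_closed_def, THEN spec[of _ n],
        THEN spec[of _ "\<lambda>i. p i / p i\<^sub>0"], THEN spec[of _ "w / p i\<^sub>0"]]
    by auto
  have "(\<Sum>i\<le>n. p i * (D ^^ i) u) - w = p i\<^sub>0 * ((\<Sum>i\<le>n. p i / p i\<^sub>0 * (D ^^ i) u) - w / p i\<^sub>0)"
    using \<open>p i\<^sub>0 \<noteq> 0\<close> by (simp add: sum_distrib_left right_diff_distrib)
  then have "Fin g < v ((\<Sum>i\<le>n. p i * (D ^^ i) u) - w)"
    using v_mult_gt[of g "p i\<^sub>0" 0] u(2) p_i\<^sub>0 by (simp add: zero_extended_def)
  with u(1) show ?thesis
    by blast
qed

end

definition monom_eval :: "nat \<Rightarrow> (nat \<Rightarrow> nat) \<Rightarrow> (nat \<Rightarrow> 'a::field) \<Rightarrow> 'a" where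
  "monom_eval n m x = (\<Prod>i\<le>n. x i ^ m i)"

lemma mpoly_eval_eq_sum_superset:
  "finite S \<Longrightarrow> {m. f m \<noteq> 0} \<subseteq> S \<Longrightarrow> mpoly_eval n f x = (\<Sum>m\<in>S. f m * monom_eval n m x)"
  unfolding mpoly_eval_def monom_eval_def by (rule sum.mono_neutral_left) auto

lemma finite_mpoly_pderiv_support:
  assumes "finite {m. f m \<noteq> 0}"
  shows "finite {m. mpoly_pderiv j f m \<noteq> 0}"
proof -
  have "{m. mpoly_pderiv j f m \<noteq> 0} \<subseteq> (\<lambda>m. m(j := m j - 1)) ` {m. f m \<noteq> 0}"
  proof
    fix m assume "m \<in> {m. mpoly_pderiv j f m \<noteq> 0}"
    then have "f (m(j := Suc (m j))) \<noteq> 0"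
      by (auto simp: mpoly_pderiv_def)
    moreover have "m = (m(j := Suc (m j)))(j := (m(j := Suc (m j))) j - 1)"
      by auto
    ultimately show "m \<in> (\<lambda>m. m(j := m j - 1)) ` {m. f m \<noteq> 0}"
      by blast
  qed
  with assms show ?thesis
    using finite_surj by blast
qed

lemma mpoly_eval_pderiv:
  assumes j: "j \<le> n" and fin: "finite {m. f m \<noteq> 0}"
  shows "mpoly_eval n (mpoly_pderiv j f) x = (\<Sum>m\<in>{m. f m \<noteq> 0}.
      f m * (of_nat (m j) * x j ^ (m j - 1) * (\<Prod>k\<in>{..n} - {j}. x k ^ m k)))"
proof -
  define T where "T = {m. f (m(j := Suc (m j))) \<noteq> 0}"
  define S where "S = {m. f m \<noteq> 0 \<and> 0 < m j}"
  have T_eq: "T = (\<lambda>m. m(j := m j - 1)) ` S"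
  proof (rule set_eqI, rule iffI)
    fix m assume "m \<in> T"
    moreover have "m = (m(j := Suc (m j)))(j := (m(j := Suc (m j))) j - 1)"
      by auto
    ultimately show "m \<in> (\<lambda>m. m(j := m j - 1)) ` S"
      unfolding T_def S_def by (intro image_eqI[where x="m(j := Suc (m j))"]) auto
  next
    fix m assume "m \<in> (\<lambda>m. m(j := m j - 1)) ` S"
    then obtain m' where "m' \<in> S" "m = m'(j := m' j - 1)"
      by auto
    moreover from this have "m(j := Suc (m j)) = m'"
      unfolding S_def by auto
    ultimately show "m \<in> T"
      unfolding T_def S_def by auto
  qed
  have "finite T"
    unfolding T_eq S_def using fin by auto
  then have "mpoly_eval n (mpoly_pderiv j f) x = (\<Sum>m\<in>T. mpoly_pderiv j f m * monom_eval n m x)"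
    by (rule mpoly_eval_eq_sum_superset) (auto simp: T_def mpoly_pderiv_def)
  also have "\<dots> = (\<Sum>m\<in>S. f m * (of_nat (m j) * x j ^ (m j - 1) * (\<Prod>k\<in>{..n} - {j}. x k ^ m k)))"
  proof (rule sum.reindex_bij_witness[of _ "\<lambda>m. m(j := m j - 1)" "\<lambda>m. m(j := Suc (m j))"])
    fix m
    have "(\<Prod>k\<in>{..n} - {j}. x k ^ (m(j := Suc (m j))) k) = (\<Prod>k\<in>{..n} - {j}. x k ^ m k)"
      by (intro prod.cong) auto
    moreover have "monom_eval n m x = x j ^ m j * (\<Prod>k\<in>{..n} - {j}. x k ^ m k)"
      unfolding monom_eval_def using j by (simp add: prod.remove)
    ultimately show "f (m(j := Suc (m j))) * (of_nat ((m(j := Suc (m j))) j)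
        * x j ^ ((m(j := Suc (m j))) j - 1) * (\<Prod>k\<in>{..n} - {j}. x k ^ (m(j := Suc (m j))) k))
      = mpoly_pderiv j f m * monom_eval n m x"
      by (simp add: mpoly_pderiv_def algebra_simps)
  qed (auto simp: T_def S_def)
  also have "\<dots> = (\<Sum>m\<in>{m. f m \<noteq> 0}. f m * (of_nat (m j) * x j ^ (m j - 1) * (\<Prod>k\<in>{..n} - {j}. x k ^ m k)))"
    by (rule sum.mono_neutral_left) (auto simp: S_def fin)
  finally show ?thesis .
qed

lemma sum_mult_prod_remove_insert:
  fixes d y :: "'b \<Rightarrow> 'a::comm_ring_1"
  assumes "finite I" "j \<notin> I"
  shows "(\<Sum>k\<in>insert j I. d k * prod y (insert j I - {k}))
    = d j * prod y I + y j * (\<Sum>k\<in>I. d k * prod y (I - {k}))"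
proof -
  have "prod y (insert j I - {k}) = y j * prod y (I - {k})" if "k \<in> I" for k
  proof -
    have "insert j I - {k} = insert j (I - {k})"
      using assms that by auto
    then show ?thesis
      using assms by simp
  qed
  then have "(\<Sum>k\<in>I. d k * prod y (insert j I - {k})) = y j * (\<Sum>k\<in>I. d k * prod y (I - {k}))"
    unfolding sum_distrib_left by (intro sum.cong) (auto simp: algebra_simps)
  with assms show ?thesis
    by (simp add: insert_Diff_if)
qed

context valued_field
begin

lemma v_prod_diff_ge:
  assumes "0 \<le> r" and "\<And>i. i \<in> I \<Longrightarrow> 0 \<le> v (x i) \<and> 0 \<le> v (y i) \<and> r \<le> v (x i - y i)"
  shows "r \<le> v (prod x I - prod y I)"
  using assms(2)
proof (induction I rule: infinite_finite_induct)
  case (insert j I)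
  have "prod x (insert j I) - prod y (insert j I) = x j * (prod x I - prod y I) + (x j - y j) * prod y I"
    using insert by (simp add: algebra_simps)
  moreover have "0 \<le> v (prod y I)"
    using insert by (auto intro: v_prod_nonneg)
  ultimately show ?case
    using insert by (metis insertI1 insertI2 v_add_ge v_mult_ge_left v_mult_ge_right)
qed (use assms(1) in auto)

lemma v_mpoly_eval_nonneg:
  "finite {m. f m \<noteq> 0} \<Longrightarrow> (\<And>m. 0 \<le> v (f m)) \<Longrightarrow> (\<And>i. i \<le> n \<Longrightarrow> 0 \<le> v (x i))
    \<Longrightarrow> 0 \<le> v (mpoly_eval n f x)"
  unfolding mpoly_eval_def by (intro v_sum_ge v_mult_nonneg v_prod_nonneg v_power_nonneg) auto

lemma v_mpoly_pderiv_nonneg: "(\<And>m. 0 \<le> v (f m)) \<Longrightarrow> 0 \<le> v (mpoly_pderiv j f m)"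
  unfolding mpoly_pderiv_def by (intro v_mult_nonneg v_of_nat_nonneg)

lemma v_power_diff_ge:
  "0 \<le> r \<Longrightarrow> 0 \<le> v x \<Longrightarrow> 0 \<le> v y \<Longrightarrow> r \<le> v (x - y) \<Longrightarrow> r \<le> v (x ^ k - y ^ k)"
  using v_prod_diff_ge[of r "{..<k}" "\<lambda>_. x" "\<lambda>_. y"] by simp

lemma v_mpoly_eval_diff_ge:
  assumes fin: "finite {m. f m \<noteq> 0}" and f: "\<And>m. 0 \<le> v (f m)" and r: "0 \<le> r"
    and x: "\<And>i. i \<le> n \<Longrightarrow> 0 \<le> v (x i) \<and> 0 \<le> v (y i) \<and> r \<le> v (x i - y i)"
  shows "r \<le> v (mpoly_eval n f x - mpoly_eval n f y)"
proof -
  have "mpoly_eval n f x - mpoly_eval n f y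
      = (\<Sum>m\<in>{m. f m \<noteq> 0}. f m * (monom_eval n m x - monom_eval n m y))"
    unfolding mpoly_eval_eq_sum_superset[OF fin order_refl]
    by (simp add: sum_subtractf right_diff_distrib)
  also have "r \<le> v \<dots>"
  proof (intro v_sum_ge v_mult_ge_left f)
    fix m
    show "r \<le> v (monom_eval n m x - monom_eval n m y)"
      unfolding monom_eval_def
      using x r by (intro v_prod_diff_ge) (auto intro: v_power_diff_ge v_power_nonneg)
  qed
  finally show ?thesis .
qed

lemma v_prod_first_order_ge:
  assumes r: "0 \<le> r"
    and xyd: "\<And>i. i \<in> I \<Longrightarrow> 0 \<le> v (y i) \<and> r \<le> v (d i) \<and> r + r \<le> v (x i - y i - d i)"
  shows "r + r \<le> v (prod x I - prod y I - (\<Sum>j\<in>I. d j * prod y (I - {j})))"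
  using xyd
proof (induction I rule: infinite_finite_induct)
  case (insert j I)
  define \<beta> where "\<beta> = (\<Sum>k\<in>I. d k * prod y (I - {k}))"
  have j: "0 \<le> v (y j)" "r \<le> v (d j)" "r + r \<le> v (x j - y j - d j)"
    using insert by auto
  have "r \<le> r + r"
    by (rule extended_le_add_nonneg[OF r])
  then have "r \<le> v ((x j - y j - d j) + d j)"
    using j by (intro v_add_ge) auto
  then have xy_j: "r \<le> v (x j - y j)"
    by simp
  have "0 \<le> v ((x j - y j) + y j)"
    using xy_j j(1) r by (intro v_add_ge) auto
  then have x_j: "0 \<le> v (x j)"
    by simp
  have IH: "r + r \<le> v (prod x I - prod y I - \<beta>)"
    unfolding \<beta>_def using insert by auto
  have \<beta>: "r \<le> v \<beta>"
    unfolding \<beta>_def using insert by (intro v_sum_ge v_mult_ge_right v_prod_nonneg) auto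
  have "prod x (insert j I) - prod y (insert j I) - (d j * prod y I + y j * \<beta>)
      = x j * (prod x I - prod y I - \<beta>) + (x j - y j - d j) * prod y I + (x j - y j) * \<beta>"
    using insert(1,2) by (simp add: algebra_simps)
  also have "r + r \<le> v \<dots>"
  proof (intro v_add_ge)
    show "r + r \<le> v (x j * (prod x I - prod y I - \<beta>))"
      using x_j IH by (rule v_mult_ge_left)
    show "r + r \<le> v ((x j - y j - d j) * prod y I)"
      using j(3) insert.prems by (intro v_mult_ge_right v_prod_nonneg) auto
    show "r + r \<le> v ((x j - y j) * \<beta>)"
      using xy_j \<beta> by (rule v_mult_ge)
  qed
  finally show ?case
    unfolding sum_mult_prod_remove_insert[OF insert(1,2)] \<beta>_def[symmetric] .
qed simp_all

lemma v_power_first_order_ge: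
  assumes "0 \<le> r" "0 \<le> v x" "r \<le> v y"
  shows "r + r \<le> v ((x + y) ^ k - x ^ k - of_nat k * x ^ (k - 1) * y)"
proof -
  have "r + r \<le> v (prod (\<lambda>_. x + y) {..<k} - prod (\<lambda>_. x) {..<k}
      - (\<Sum>j<k. y * prod (\<lambda>_. x) ({..<k} - {j})))"
    using assms by (intro v_prod_first_order_ge) auto
  moreover have "(\<Sum>j<k. y * prod (\<lambda>_. x) ({..<k} - {j})) = of_nat k * x ^ (k - 1) * y"
    by (simp add: card_Diff_singleton)
  ultimately show ?thesis
    by (simp add: mult_ac)
qed

lemma v_mpoly_eval_first_order_ge:
  assumes fin: "finite {m. f m \<noteq> 0}" and f: "\<And>m. 0 \<le> v (f m)" and r: "0 \<le> r"
    and xy: "\<And>i. i \<le> n \<Longrightarrow> 0 \<le> v (x i) \<and> r \<le> v (y i)"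
  shows "r + r \<le> v (mpoly_eval n f (\<lambda>i. x i + y i) - mpoly_eval n f x
     - (\<Sum>j\<le>n. mpoly_eval n (mpoly_pderiv j f) x * y j))"
proof -
  let ?S = "{m. f m \<noteq> 0}"
  let ?d = "\<lambda>m j. of_nat (m j) * x j ^ (m j - 1) * y j"
  have "(\<Sum>j\<le>n. mpoly_eval n (mpoly_pderiv j f) x * y j)
      = (\<Sum>j\<le>n. \<Sum>m\<in>?S. f m * (?d m j * (\<Prod>k\<in>{..n} - {j}. x k ^ m k)))"
    by (intro sum.cong refl)
      (simp add: mpoly_eval_pderiv[OF _ fin] sum_distrib_left sum_distrib_right mult_ac)
  also have "\<dots> = (\<Sum>m\<in>?S. f m * (\<Sum>j\<le>n. ?d m j * (\<Prod>k\<in>{..n} - {j}. x k ^ m k)))"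
    by (subst sum.swap) (simp add: sum_distrib_left)
  finally have "mpoly_eval n f (\<lambda>i. x i + y i) - mpoly_eval n f x
      - (\<Sum>j\<le>n. mpoly_eval n (mpoly_pderiv j f) x * y j)
    = (\<Sum>m\<in>?S. f m * (monom_eval n m (\<lambda>i. x i + y i) - monom_eval n m x
      - (\<Sum>j\<le>n. ?d m j * (\<Prod>k\<in>{..n} - {j}. x k ^ m k))))"
    unfolding mpoly_eval_eq_sum_superset[OF fin order_refl]
    by (simp add: sum_subtractf right_diff_distrib)
  also have "r + r \<le> v \<dots>"
  proof (intro v_sum_ge v_mult_ge_left f)
    fix m
    show "r + r \<le> v (monom_eval n m (\<lambda>i. x i + y i) - monom_eval n m x
      - (\<Sum>j\<le>n. ?d m j * (\<Prod>k\<in>{..n} - {j}. x k ^ m k)))"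
      unfolding monom_eval_def
    proof (intro v_prod_first_order_ge r conjI)
      fix i assume "i \<in> {..n}"
      then have x: "0 \<le> v (x i)" and y: "r \<le> v (y i)"
        using xy by auto
      show "0 \<le> v (x i ^ m i)"
        using x by (rule v_power_nonneg)
      show "r \<le> v (?d m i)"
        using x y by (intro v_mult_ge_left v_mult_nonneg v_of_nat_nonneg v_power_nonneg)
      show "r + r \<le> v ((x i + y i) ^ m i - x i ^ m i - ?d m i)"
        using r x y by (rule v_power_first_order_ge)
    qed
  qed
  finally show ?thesis .
qed

end

lemma spherically_complete_chain_bound:
  fixes v :: "'a::field \<Rightarrow> 'g::linordered_ab_group_add extended" and r :: "'a \<Rightarrow> 'g"
  assumes sph: "spherically_complete v"
    and nested: "\<And>a c. a \<in> A \<Longrightarrow> c \<in> vball v a (r a) \<Longrightarrow> c \<in> A \<and> vball v c (r c) \<subseteq> vball v a (r a)"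
    and C: "C \<subseteq> A" "C \<noteq> {}"
    and chain: "\<And>a a'. a \<in> C \<Longrightarrow> a' \<in> C \<Longrightarrow>
      vball v a (r a) \<subseteq> vball v a' (r a') \<or> vball v a' (r a') \<subseteq> vball v a (r a)"
  shows "\<exists>c\<in>A. \<forall>a\<in>C. vball v c (r c) \<subseteq> vball v a (r a)"
proof -
  let ?\<B> = "(\<lambda>a. vball v a (r a)) ` C"
  have "\<Inter>?\<B> \<noteq> {}"
  proof (rule sph[unfolded spherically_complete_def, rule_format])
    show "?\<B> \<noteq> {}"
      using C(2) by simp
    show "\<exists>c \<alpha>. B = vball v c \<alpha>" if "B \<in> ?\<B>" for B
      using that by blast
    show "B1 \<subseteq> B2 \<or> B2 \<subseteq> B1" if "B1 \<in> ?\<B>" "B2 \<in> ?\<B>" for B1 B2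
      using that chain by (auto simp only: image_iff)
  qed
  then obtain c where c: "\<And>a. a \<in> C \<Longrightarrow> c \<in> vball v a (r a)"
    by blast
  obtain a\<^sub>1 where "a\<^sub>1 \<in> C"
    using C(2) by blast
  then have "c \<in> A"
    using nested[OF subsetD[OF C(1)] c] by blast
  moreover have "vball v c (r c) \<subseteq> vball v a (r a)" if "a \<in> C" for a
    using nested[OF subsetD[OF C(1) that] c[OF that]] by blast
  ultimately show ?thesis
    by blast
qed

lemma spherically_complete_minimal_ball:
  fixes v :: "'a::field \<Rightarrow> 'g::linordered_ab_group_add extended" and r :: "'a \<Rightarrow> 'g"
  assumes sph: "spherically_complete v" and "a\<^sub>0 \<in> A"
    and nested: "\<And>a c. a \<in> A \<Longrightarrow> c \<in> vball v a (r a) \<Longrightarrow> c \<in> A \<and> vball v c (r c) \<subseteq> vball v a (r a)"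
  shows "\<exists>a\<in>A. \<forall>c\<in>vball v a (r a). vball v c (r c) = vball v a (r a)"
proof -
  \<comment> \<open>Zorn's lemma is applied to the complements, turning shrinking balls into growing sets.\<close>
  define \<F> where "\<F> = (\<lambda>a. - vball v a (r a)) ` A"
  have "\<exists>U\<in>\<F>. \<forall>X\<in>C. X \<subseteq> U" if C: "C \<in> chains \<F>" for C
  proof (cases "C = {}")
    case True
    then show ?thesis
      using \<open>a\<^sub>0 \<in> A\<close> unfolding \<F>_def by auto
  next
    case False
    define C' where "C' = {a \<in> A. - vball v a (r a) \<in> C}"
    have C_eq: "C = (\<lambda>a. - vball v a (r a)) ` C'"
      using C unfolding chains_def C'_def \<F>_def by auto
    have "\<exists>c\<in>A. \<forall>a\<in>C'. vball v c (r c) \<subseteq> vball v a (r a)"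
    proof (rule spherically_complete_chain_bound[OF sph nested])
      show "C' \<subseteq> A" "C' \<noteq> {}"
        using False C_eq unfolding C'_def by auto
      fix a a' assume "a \<in> C'" "a' \<in> C'"
      then have "- vball v a (r a) \<in> C" "- vball v a' (r a') \<in> C"
        unfolding C'_def by auto
      then have "- vball v a (r a) \<subseteq> - vball v a' (r a') \<or> - vball v a' (r a') \<subseteq> - vball v a (r a)"
        using chainsD[OF C] by blast
      then show "vball v a (r a) \<subseteq> vball v a' (r a') \<or> vball v a' (r a') \<subseteq> vball v a (r a)"
        by (simp add: disj_commute)
    qed
    then obtain c where "c \<in> A" "\<And>a. a \<in> C' \<Longrightarrow> vball v c (r c) \<subseteq> vball v a (r a)"
      by blast
    then show ?thesis
      unfolding C_eq \<F>_def by (intro bexI[of _ "- vball v c (r c)"]) auto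
  qed
  then obtain M where M: "M \<in> \<F>" "\<forall>X\<in>\<F>. M \<subseteq> X \<longrightarrow> X = M"
    using Zorn_Lemma2[of \<F>] by blast
  then obtain a where a: "a \<in> A" "M = - vball v a (r a)"
    unfolding \<F>_def by blast
  have "vball v c (r c) = vball v a (r a)" if "c \<in> vball v a (r a)" for c
  proof -
    have "- vball v c (r c) \<in> \<F>" "M \<subseteq> - vball v c (r c)"
      using nested[OF a(1) that] a(2) unfolding \<F>_def by auto
    then show ?thesis
      using M(2) a(2) by blast
  qed
  with a(1) show ?thesis
    by blast
qed

locale vd_field = valued_field v
  for v :: "'a::field \<Rightarrow> 'g::linordered_ab_group_add extended" +
  fixes D :: "'a \<Rightarrow> 'a" and e :: 'a
  assumes D_add: "D (a + b) = D a + D b"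
    and v_D_ge: "v a \<le> v (D a)"
    and v_e_nonneg: "0 \<le> v e"
    and D_mult: "D (a * b) = a * D b + b * D a + e * D a * D b"
    and values_D_gt: "{v a | a. v a < v (D a)} = {v a | a. a \<noteq> 0}"
begin

lemma exists_D_gt_same_value:
  assumes "x \<noteq> 0" shows "\<exists>t. v t = v x \<and> v t < v (D t)"
proof -
  have "v x \<in> {v a | a. v a < v (D a)}"
    unfolding values_D_gt using assms by blast
  then show ?thesis
    by auto
qed

lemma D_zero [simp]: "D 0 = 0"
  using D_add[of 0 0] by (metis add_cancel_right_right)

lemma D_uminus: "D (- a) = - D a"
  using D_add[of a "- a"] by (simp add: add_eq_0_iff2)

lemma D_diff: "D (a - b) = D a - D b"
  using D_add[of a "- b"] D_uminus[of b] by simp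

lemma Diter_add: "(D ^^ i) (a + b) = (D ^^ i) a + (D ^^ i) b"
  by (induction i) (auto simp: D_add)

lemma Diter_diff: "(D ^^ i) (a - b) = (D ^^ i) a - (D ^^ i) b"
  by (induction i) (auto simp: D_diff)

lemma v_Diter_ge: "v a \<le> v ((D ^^ i) a)"
  by (induction i) (auto intro: order_trans v_D_ge)

lemma v_Diter_nonneg: "0 \<le> v a \<Longrightarrow> 0 \<le> v ((D ^^ i) a)"
  using v_Diter_ge[of a i] by simp

lemma v_Diter_mult_diff_gt:
  assumes t: "v t < v (D t)" and u: "0 \<le> v u"
  shows "v t < v ((D ^^ i) (t * u) - t * (D ^^ i) u)"
proof (induction i)
  case 0
  from t have "t \<noteq> 0"
    by auto
  then show ?case
    by (cases "v t") auto
next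
  case (Suc i)
  define w where "w = (D ^^ i) u"
  have w: "0 \<le> v w" and Dw: "0 \<le> v (D w)"
    unfolding w_def using u v_Diter_ge[of u i] v_D_ge[of "(D ^^ i) u"] by auto
  have "(D ^^ Suc i) (t * u) - t * (D ^^ Suc i) u
      = D ((D ^^ i) (t * u) - t * w) + (w * D t + e * D t * D w)"
    by (simp add: w_def D_diff D_mult algebra_simps)
  moreover have "v t < v (D ((D ^^ i) (t * u) - t * w))"
    using Suc v_D_ge unfolding w_def by (meson order_less_le_trans)
  moreover have "v t < v (w * D t)"
    using v_mult_ge_left[OF w order_refl] t by (meson order_less_le_trans)
  moreover have "v t < v (e * D t * D w)"
    using v_mult_ge_right[OF v_mult_ge_left[OF v_e_nonneg order_refl] Dw] t
    by (meson order_less_le_trans)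
  ultimately show ?case
    by (simp add: v_add_gt)
qed

end

locale hensel_setting = vd_field v D e
  for v :: "'a::field \<Rightarrow> 'g::linordered_ab_group_add extended" and D e +
  fixes n :: nat and f :: "(nat \<Rightarrow> nat) \<Rightarrow> 'a" and b :: 'a and g :: 'g and i\<^sub>0 :: nat
  assumes support_finite: "finite {m. f m \<noteq> 0}"
    and coeff_integral: "\<And>m. 0 \<le> v (f m)"
    and b_integral: "0 \<le> v b"
    and pderiv_b_ge: "\<And>i. i \<le> n \<Longrightarrow> Fin g \<le> v (mpoly_eval n (mpoly_pderiv i f) (\<lambda>k. (D ^^ k) b))"
    and i\<^sub>0_le: "i\<^sub>0 \<le> n"
    and pderiv_b_i\<^sub>0: "v (mpoly_eval n (mpoly_pderiv i\<^sub>0 f) (\<lambda>k. (D ^^ k) b)) = Fin g"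
    and F_b_gt: "Fin (g + g) < v (mpoly_eval n f (\<lambda>k. (D ^^ k) b))"
    and residue_closed: "residue_linearly_D_closed v D"
    and spherically_complete: "spherically_complete v"
begin

definition F :: "'a \<Rightarrow> 'a" where
  "F a = mpoly_eval n f (\<lambda>k. (D ^^ k) a)"

definition dF :: "nat \<Rightarrow> 'a \<Rightarrow> 'a" where
  "dF i a = mpoly_eval n (mpoly_pderiv i f) (\<lambda>k. (D ^^ k) a)"

lemma v_dF_nonneg: "0 \<le> v a \<Longrightarrow> 0 \<le> v (dF i a)"
  unfolding dF_def
  by (intro v_mpoly_eval_nonneg finite_mpoly_pderiv_support support_finite
      v_mpoly_pderiv_nonneg coeff_integral v_Diter_nonneg)

lemma g_nonneg: "0 \<le> g"
  using v_dF_nonneg[OF b_integral, of i\<^sub>0] pderiv_b_i\<^sub>0 by (simp add: dF_def zero_extended_def)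

lemma less_of_double_less: "g + g < z \<Longrightarrow> g < z"
  using g_nonneg le_add_same_cancel1[of g g] by (meson order_le_less_trans)

lemma v_nonneg_near_b:
  assumes "Fin g < v (a - b)" shows "0 \<le> v (a - b)" "0 \<le> v a"
proof -
  show "0 \<le> v (a - b)"
    using Fin_less_imp_nonneg[OF g_nonneg assms] .
  then have "0 \<le> v (b + (a - b))"
    using b_integral by (intro v_add_ge)
  then show "0 \<le> v a"
    by simp
qed

lemma dF_near_b:
  assumes a: "Fin g < v (a - b)"
  shows "i \<le> n \<Longrightarrow> Fin g \<le> v (dF i a)" and "v (dF i\<^sub>0 a) = Fin g"
proof -
  have "v (a - b) \<le> v (dF i a - dF i b)" for i
    unfolding dF_def
  proof (intro v_mpoly_eval_diff_ge finite_mpoly_pderiv_support support_finite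
      v_mpoly_pderiv_nonneg coeff_integral v_nonneg_near_b[OF a] conjI)
    fix k
    show "0 \<le> v ((D ^^ k) a)" "0 \<le> v ((D ^^ k) b)"
      using v_Diter_nonneg v_nonneg_near_b[OF a] b_integral by auto
    show "v (a - b) \<le> v ((D ^^ k) a - (D ^^ k) b)"
      using v_Diter_ge[of "a - b" k] by (simp add: Diter_diff)
  qed
  with a have close: "Fin g < v (dF i a - dF i b)" for i
    by (meson order_less_le_trans)
  show "Fin g \<le> v (dF i a)" if "i \<le> n"
    using v_add_ge[OF pderiv_b_ge[OF that] order_less_imp_le[OF close[of i]]]
    by (simp add: dF_def)
  show "v (dF i\<^sub>0 a) = Fin g"
    using v_add_eq_left[of "dF i\<^sub>0 b" "dF i\<^sub>0 a - dF i\<^sub>0 b"] close[of i\<^sub>0] pderiv_b_i\<^sub>0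
    by (simp add: dF_def)
qed

lemma F_first_order_ge:
  assumes "0 \<le> v a" "0 \<le> r" "r \<le> v y"
  shows "r + r \<le> v (F (a + y) - F a - (\<Sum>j\<le>n. dF j a * (D ^^ j) y))"
  unfolding F_def dF_def Diter_add
  using assms v_Diter_nonneg v_Diter_ge[of y] order_trans
  by (intro v_mpoly_eval_first_order_ge support_finite coeff_integral) blast+

lemma exists_scaling_element:
  assumes a: "Fin g < v (a - b)" and Fa: "v (F a) = Fin z"
  shows "\<exists>t. v t = Fin (z - g) \<and> v t < v (D t)"
proof -
  have v_quot: "v (F a / dF i\<^sub>0 a) = Fin (z - g)"
    using v_divide[OF dF_near_b(2)[OF a]] Fa by simp
  then have "F a / dF i\<^sub>0 a \<noteq> 0"
    by auto
  with v_quot show ?thesis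
    using exists_D_gt_same_value[of "F a / dF i\<^sub>0 a"] by auto
qed

text \<open>The correction is \<open>t * u\<close>, where \<open>u\<close> solves the linearised equation over the residue
  field and the scaling \<open>t\<close> satisfies \<open>v t < v (D t)\<close>, so that \<open>D\<^sup>j (t * u)\<close> agrees with
  \<open>t * D\<^sup>j u\<close> up to terms of higher value.\<close>

lemma newton_step:
  assumes a: "Fin g < v (a - b)" and Fa: "v (F a) = Fin z" and z: "g + g < z"
  shows "\<exists>a'. Fin (z - g) \<le> v (a' - a) \<and> v (F a) < v (F a')"
proof -
  define \<delta> where "\<delta> = z - g"
  have \<delta>: "g < \<delta>" "0 \<le> Fin \<delta>" "z < \<delta> + \<delta>" "z = g + \<delta>"
    using z g_nonneg less_of_double_less[OF z] unfolding \<delta>_def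
    by (auto simp: less_diff_eq zero_extended_def)
  obtain t where t: "v t = Fin \<delta>" "v t < v (D t)"
    using exists_scaling_element[OF a Fa] unfolding \<delta>_def by blast
  have "Fin g \<le> v (- F a / t)"
    using v_divide[OF t(1), of "- F a"] Fa \<delta>(4) by simp
  then obtain u where u: "0 \<le> v u" "Fin g < v ((\<Sum>j\<le>n. dF j a * (D ^^ j) u) - - F a / t)"
    using residue_linearly_D_closed_scaled[of D i\<^sub>0 n g "\<lambda>j. dF j a",
        OF residue_closed i\<^sub>0_le dF_near_b(1)[OF a] dF_near_b(2)[OF a]]
    by blast
  have tu: "Fin \<delta> \<le> v (t * u)"
    using v_mult_ge_right[of "Fin \<delta>" t u] t u by simp
  have "t \<noteq> 0"
    using t by auto
  define R where "R = F (a + t * u) - F a - (\<Sum>j\<le>n. dF j a * (D ^^ j) (t * u))"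
  define S where "S = (\<Sum>j\<le>n. dF j a * ((D ^^ j) (t * u) - t * (D ^^ j) u))"
  define T where "T = t * ((\<Sum>j\<le>n. dF j a * (D ^^ j) u) - - F a / t)"
  have "Fin z < Fin \<delta> + Fin \<delta>"
    using \<delta>(3) by simp
  then have "Fin z < v R"
    unfolding R_def using F_first_order_ge[OF v_nonneg_near_b(2)[OF a] \<delta>(2) tu]
    by (rule order_less_le_trans)
  moreover have "Fin z < v S"
    unfolding S_def using dF_near_b(1)[OF a] v_Diter_mult_diff_gt[OF t(2) u(1)] t(1) \<delta>(4)
    by (intro v_sum_gt) (auto intro: v_mult_gt)
  moreover have "Fin z < v T"
    unfolding T_def using v_mult_gt[of \<delta> t g] t(1) u(2) \<delta>(4) by (simp add: add.commute)
  ultimately have "Fin z < v (R + S + T)"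
    by (intro v_add_gt)
  moreover have "R + S + T = F (a + t * u)"
    using \<open>t \<noteq> 0\<close> unfolding R_def S_def T_def
    by (simp add: sum_subtractf sum_distrib_left right_diff_distrib algebra_simps)
  ultimately have "Fin z < v (F (a + t * u))"
    by simp
  with Fa tu show ?thesis
    unfolding \<delta>_def by (intro exI[of _ "a + t * u"]) auto
qed

lemma F_ge_on_ball:
  assumes a: "Fin g < v (a - b)" and Fa: "v (F a) = Fin z" and z: "g + g < z"
    and c: "Fin (z - g) \<le> v (c - a)"
  shows "Fin z \<le> v (F c)"
proof -
  have r: "0 \<le> Fin (z - g)" "Fin z \<le> Fin (z - g) + Fin (z - g)"
    using z less_of_double_less[OF z] by (auto simp: le_diff_eq zero_extended_def)
  have "Fin z \<le> v (F (a + (c - a)) - F a - (\<Sum>j\<le>n. dF j a * (D ^^ j) (c - a)))"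
    using F_first_order_ge[OF v_nonneg_near_b(2)[OF a] r(1) c] r(2) by (rule order_trans[rotated])
  moreover have "Fin z \<le> v (\<Sum>j\<le>n. dF j a * (D ^^ j) (c - a))"
  proof (rule v_sum_ge)
    fix j assume "j \<in> {..n}"
    then have "Fin g + Fin (z - g) \<le> v (dF j a * (D ^^ j) (c - a))"
      using dF_near_b(1)[OF a] c v_Diter_ge[of "c - a" j] by (intro v_mult_ge) auto
    then show "Fin z \<le> v (dF j a * (D ^^ j) (c - a))"
      by simp
  qed
  ultimately have "Fin z \<le> v ((F (a + (c - a)) - F a - (\<Sum>j\<le>n. dF j a * (D ^^ j) (c - a)))
      + (\<Sum>j\<le>n. dF j a * (D ^^ j) (c - a)) + F a)"
    using Fa by (intro v_add_ge) auto
  then show ?thesis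
    by simp
qed

end

locale hensel_no_zero = hensel_setting v D e n f b g i\<^sub>0
  for v :: "'a::field \<Rightarrow> 'g::linordered_ab_group_add extended" and D e n f b g i\<^sub>0 +
  assumes no_zero_near_b: "\<And>a. Fin g < v (a - b) \<Longrightarrow> F a \<noteq> 0"
begin

definition val_F :: "'a \<Rightarrow> 'g" where
  "val_F a = (case v (F a) of Fin z \<Rightarrow> z | _ \<Rightarrow> 0)"

definition radius :: "'a \<Rightarrow> 'g" where
  "radius a = val_F a - g"

definition approx_zeros :: "'a set" where
  "approx_zeros = {a. Fin (radius b) \<le> v (a - b) \<and> Fin (val_F b) \<le> v (F a)}"

lemma v_F_eq_val_F:
  assumes "Fin g < v (a - b)" shows "v (F a) = Fin (val_F a)"
  using no_zero_near_b[OF assms] unfolding val_F_def by (cases "v (F a)") auto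

lemma double_g_less_val_F_b: "g + g < val_F b"
  using F_b_gt v_F_eq_val_F[of b] by (simp add: F_def)

lemma b_in_approx_zeros: "b \<in> approx_zeros"
  using v_F_eq_val_F[of b] unfolding approx_zeros_def by simp

lemma approx_zerosD:
  assumes "a \<in> approx_zeros"
  shows "Fin g < v (a - b)" and "val_F b \<le> val_F a"
proof -
  have "g < radius b"
    using double_g_less_val_F_b unfolding radius_def by (simp add: less_diff_eq)
  then have "Fin g < Fin (radius b)"
    by simp
  then show a: "Fin g < v (a - b)"
    using assms unfolding approx_zeros_def by (blast intro: order_less_le_trans)
  show "val_F b \<le> val_F a"
    using assms v_F_eq_val_F[OF a] unfolding approx_zeros_def by simp
qed

lemma double_g_less_val_F: "a \<in> approx_zeros \<Longrightarrow> g + g < val_F a"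
  using double_g_less_val_F_b approx_zerosD(2) by (rule order_less_le_trans)

lemma approx_zeros_ball_nested:
  assumes a: "a \<in> approx_zeros" and c: "c \<in> vball v a (radius a)"
  shows "c \<in> approx_zeros \<and> vball v c (radius c) \<subseteq> vball v a (radius a)"
proof
  have Fc: "Fin (val_F a) \<le> v (F c)"
    using F_ge_on_ball[OF approx_zerosD(1)[OF a] v_F_eq_val_F[OF approx_zerosD(1)[OF a]]
        double_g_less_val_F[OF a]] c
    unfolding vball_def radius_def by simp
  have "Fin (radius b) \<le> Fin (radius a)"
    using approx_zerosD(2)[OF a] unfolding radius_def by simp
  then have "Fin (radius b) \<le> v ((c - a) + (a - b))"
    using a c unfolding approx_zeros_def vball_def by (blast intro: v_add_ge order_trans)
  moreover have "Fin (val_F b) \<le> v (F c)"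
    using approx_zerosD(2)[OF a] Fc by (metis less_eq_extended.simps(1) order_trans)
  ultimately show c_in: "c \<in> approx_zeros"
    unfolding approx_zeros_def by simp
  have "val_F a \<le> val_F c"
    using Fc v_F_eq_val_F[OF approx_zerosD(1)[OF c_in]] by simp
  then show "vball v c (radius c) \<subseteq> vball v a (radius a)"
    using c unfolding radius_def by (intro vball_subset) auto
qed

lemma no_minimal_ball: False
proof -
  obtain a where a: "a \<in> approx_zeros"
    and minimal: "\<And>c. c \<in> vball v a (radius a) \<Longrightarrow> vball v c (radius c) = vball v a (radius a)"
    using spherically_complete_minimal_ball[OF spherically_complete b_in_approx_zeros
        approx_zeros_ball_nested] by blast
  have near: "Fin g < v (a - b)"
    using approx_zerosD(1)[OF a] .
  obtain a' where a': "Fin (radius a) \<le> v (a' - a)" "v (F a) < v (F a')"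
    using newton_step[OF near v_F_eq_val_F[OF near] double_g_less_val_F[OF a]]
    unfolding radius_def by blast
  then have a'_ball: "a' \<in> vball v a (radius a)"
    by (simp add: vball_def)
  have "radius a < radius a'"
    using a'(2) v_F_eq_val_F[OF near] v_F_eq_val_F[OF approx_zerosD(1)]
      approx_zeros_ball_nested[OF a a'_ball] by (simp add: radius_def)
  obtain t where t: "v t = Fin (radius a)"
    using exists_scaling_element[OF near v_F_eq_val_F[OF near]] unfolding radius_def by blast
  have "Fin (radius a) \<le> v ((a' - a) + t)"
    using a'(1) t by (intro v_add_ge) auto
  then have "a' + t \<in> vball v a (radius a)"
    by (simp add: vball_def algebra_simps)
  then have "a' + t \<in> vball v a' (radius a')"
    using minimal[OF a'_ball] by simp
  then have "Fin (radius a') \<le> v t"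
    by (simp add: vball_def)
  with t \<open>radius a < radius a'\<close> show False
    by simp
qed

end

lemma (in hensel_setting) exists_zero_near_b: "\<exists>a. F a = 0 \<and> Fin g < v (a - b)"
proof (rule ccontr)
  assume "\<nexists>a. F a = 0 \<and> Fin g < v (a - b)"
  then interpret hensel_no_zero v D e n f b g i\<^sub>0
    by unfold_locales blast
  show False
    by (rule no_minimal_ball)
qed

lemma VD_field_imp_vd_field:
  assumes "VD_field v D" obtains e where "vd_field v D e"
  using assms unfolding VD_field_def vd_field_def vd_field_axioms_def valued_field_def by blast

theorem theorem5:
  fixes v :: "'a::field \<Rightarrow> 'g::linordered_ab_group_add extended"
    and D :: "'a \<Rightarrow> 'a"
    and n :: nat
    and f :: "(nat \<Rightarrow> nat) \<Rightarrow> 'a"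
    and b :: 'a
  assumes "VD_field v D"
    and "spherically_complete v"
    and "residue_linearly_D_closed v D"
    and "is_mpoly n f"
    and "\<forall>m. 0 \<le> v (f m)"
    and "0 \<le> v b"
    and "Min ((\<lambda>i. v (mpoly_eval n (mpoly_pderiv i f) (\<lambda>k. (D ^^ k) b))) ` {..n}) < Pinf"
    and "Min ((\<lambda>i. v (mpoly_eval n (mpoly_pderiv i f) (\<lambda>k. (D ^^ k) b))) ` {..n})
         + Min ((\<lambda>i. v (mpoly_eval n (mpoly_pderiv i f) (\<lambda>k. (D ^^ k) b))) ` {..n})
         < v (mpoly_eval n f (\<lambda>k. (D ^^ k) b))"
  shows "\<exists>a. mpoly_eval n f (\<lambda>k. (D ^^ k) a) = 0 \<and>
             Min ((\<lambda>i. v (mpoly_eval n (mpoly_pderiv i f) (\<lambda>k. (D ^^ k) b))) ` {..n}) < v (a - b)"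
proof -
  obtain e where "vd_field v D e"
    using VD_field_imp_vd_field[OF assms(1)] .
  then interpret vd_field v D e .
  define \<gamma> where "\<gamma> = Min ((\<lambda>i. v (mpoly_eval n (mpoly_pderiv i f) (\<lambda>k. (D ^^ k) b))) ` {..n})"
  have "\<gamma> \<in> (\<lambda>i. v (mpoly_eval n (mpoly_pderiv i f) (\<lambda>k. (D ^^ k) b))) ` {..n}"
    unfolding \<gamma>_def by (intro Min_in) auto
  then obtain i\<^sub>0 where i\<^sub>0: "i\<^sub>0 \<le> n" "v (mpoly_eval n (mpoly_pderiv i\<^sub>0 f) (\<lambda>k. (D ^^ k) b)) = \<gamma>"
    by auto
  obtain g where g: "\<gamma> = Fin g"
    using assms(7) i\<^sub>0(2) v_neq_Minf unfolding \<gamma>_def[symmetric] by (cases \<gamma>) auto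
  interpret hensel_setting v D e n f b g i\<^sub>0
  proof (unfold_locales)
    show "\<And>i. i \<le> n \<Longrightarrow> Fin g \<le> v (mpoly_eval n (mpoly_pderiv i f) (\<lambda>k. (D ^^ k) b))"
      unfolding g[symmetric] \<gamma>_def by (intro Min_le) auto
  qed (use assms \<open>vd_field v D e\<close> i\<^sub>0 g in
       \<open>auto simp: \<gamma>_def is_mpoly_def vd_field_def vd_field_axioms_def\<close>)
  show ?thesis
    using exists_zero_near_b unfolding F_def \<gamma>_def[symmetric] g by blast
qed

end
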